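(* Let $G$ be a graph (without multiple edges) on the node set $\{1,\dots,N\}$, where $N=n_1+n_2$ with $n_1,n_2\ge 2$ and $N\ge 4$, and assign to each edge $(i,j)\in G$ a fixed real weight $w_{ij}$. Let the labels $(g_1,\dots,g_N)$ be uniformly distributed over all binary vectors with exactly $n_1$ zeros and $n_2$ ones, and set $R_1^w=\sum_{(i,j)\in G} w_{ij}I(g_i=g_j=0)$, $R_2^w=\sum_{(i,j)\in G} w_{ij}I(g_i=g_j=1)$. Define $S_1=\sum_{(i,j)\in G}w_{ij}^2$, $S_2=\sum_{i=1}^N\Big(\sum_{j:(i,j)\in G}w_{ij}\Big)^2-S_1$ (equivalently, the sum of $w_ew_f$ over ordered pairs $(e,f)$ of edges of $G$ sharing at least one endpoint, the case $e=f$ included once), and $S_3=\Big(\sum_{(i,j)\in G}w_{ij}\Big)^2$ (the sum of $w_ew_f$ over all ordered pairs of edges $(e,f)$, including $e=f$). Then, writing $K=\frac{n_1n_2(n_1-1)(n_2-1)}{N(N-1)(N-2)(N-3)}$, $$\mathbf{E}(R_1^w)=\sum_{(i,j)\in G}w_{ij}\frac{n_1(n_1-1)}{N(N-1)},\qquad \mathbf{E}(R_2^w)=\sum_{(i,j)\in G}w_{ij}\frac{n_2(n_2-1)}{N(N-1)},$$ $$\mathbf{Var}(R_1^w)=K\Big\{-S_2+\tfrac{2(2N-3)}{N(N-1)}S_3+\tfrac{N-3}{n_2-1}(S_1+S_2)-\tfrac{4(N-3)}{N(n_2-1)}S_3\Big\},$$ $$\mathbf{Var}(R_2^w)=K\Big\{-S_2+\tfrac{2(2N-3)}{N(N-1)}S_3+\tfrac{N-3}{n_1-1}(S_1+S_2)-\tfrac{4(N-3)}{N(n_1-1)}S_3\Big\},$$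 $$\mathbf{Cov}(R_1^w,R_2^w)=K\Big\{-S_2+\tfrac{2(2N-3)}{N(N-1)}S_3\Big\}.$$
   Context: The labels $g_i$ encode sample membership of the pooled observations ($g_i=0$: first sample of size $n_1$; $g_i=1$: second sample of size $n_2$); the uniform distribution over label vectors with the given counts is the permutation null distribution. Edges are unordered pairs, each counted once in sums over $(i,j)\in G$. *)

theory Defs
  imports "HOL-Probability.Probability"
begin

definition label_vectors :: "nat \<Rightarrow> nat \<Rightarrow> (nat \<Rightarrow> nat) set" where
  "label_vectors n1 n2 =
     {g. (\<forall>i\<in>{1..n1+n2}. g i \<in> {0,1}) \<and> (\<forall>i. i \<notin> {1..n1+n2} \<longrightarrow> g i = 0)
         \<and> card {i\<in>{1..n1+n2}. g i = 0} = n1}"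

definition label_pmf :: "nat \<Rightarrow> nat \<Rightarrow> (nat \<Rightarrow> nat) pmf" where
  "label_pmf n1 n2 = pmf_of_set (label_vectors n1 n2)"

definition simple_graph_on :: "nat \<Rightarrow> nat set set \<Rightarrow> bool" where
  "simple_graph_on N E \<longleftrightarrow>
     (\<forall>e\<in>E. \<exists>i j. i \<noteq> j \<and> i \<in> {1..N} \<and> j \<in> {1..N} \<and> e = {i, j})"

definition Rw :: "nat set set \<Rightarrow> (nat set \<Rightarrow> real) \<Rightarrow> nat \<Rightarrow> (nat \<Rightarrow> nat) \<Rightarrow> real" where
  "Rw E w a g = (\<Sum>e\<in>E. w e * (if (\<forall>i\<in>e. g i = a) then 1 else 0))"

definition covariance :: "'a pmf \<Rightarrow> ('a \<Rightarrow> real) \<Rightarrow> ('a \<Rightarrow> real) \<Rightarrow> real" where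
  "covariance p X Y =
     measure_pmf.expectation p (\<lambda>x. (X x - measure_pmf.expectation p X) *
                                     (Y x - measure_pmf.expectation p Y))"

end

theory Submission
  imports Defs
begin

text \<open>Label vectors correspond to their zero sets, the n1-subsets of {1..N}. Hence the
  probability that a set A of a nodes is labelled 0 and a disjoint set B of b nodes is labelled 1
  is the falling factorial ratio (n1)_a (n2)_b / (N)_(a+b); it depends only on a and b.
  Expanding products of the R's into double sums over pairs of edges e, f, each second moment is a
  sum of w e * w f times such a probability, which depends only on card (e \<inter> f) \<in> {0, 1, 2}
  (and card (e \<inter> f) = 2 iff e = f). The double sum therefore collapses to a combination of
  S3 = \<Sum>w e * w f, S1 + S2 = \<Sum>w e * w f * card (e \<inter> f) and S1 (sums over ordered pairs of
  edges), and the stated formulas reduce to rational identities in n1 and n2.\<close>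

definition falling_fact :: "real \<Rightarrow> nat \<Rightarrow> real" where
  "falling_fact x k = (\<Prod>i<k. x - real i)"

lemma falling_fact_numerals:
  "falling_fact x 0 = 1"
  "falling_fact x 2 = x * (x - 1)"
  "falling_fact x 3 = x * (x - 1) * (x - 2)"
  "falling_fact x 4 = x * (x - 1) * (x - 2) * (x - 3)"
  by (simp_all add: falling_fact_def eval_nat_numeral prod.lessThan_Suc algebra_simps)

lemma falling_fact_of_nat_eq_0: "n < k \<Longrightarrow> falling_fact (real n) k = 0"
  by (auto simp: falling_fact_def prod_zero_iff intro!: bexI[of _ n])

lemma falling_fact_of_nat_nonzero: "k \<le> n \<Longrightarrow> falling_fact (real n) k \<noteq> 0"
  by (auto simp: falling_fact_def prod_zero_iff)

lemma fact_eq_fact_diff_mult_falling_fact: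
  "k \<le> n \<Longrightarrow> (fact n :: real) = fact (n - k) * falling_fact (real n) k"
proof (induction k)
  case (Suc k)
  have "(fact (n - k) :: real) = (real n - real k) * fact (n - Suc k)"
    using Suc.prems by (simp add: fact_reduce of_nat_diff Suc_diff_Suc)
  with Suc show ?case
    by (simp add: falling_fact_def prod.lessThan_Suc)
qed (simp add: falling_fact_def)

definition labels_of_zero_set :: "nat \<Rightarrow> nat set \<Rightarrow> nat \<Rightarrow> nat" where
  "labels_of_zero_set N Z = (\<lambda>i. if i \<in> {1..N} - Z then 1 else 0)"

lemma inj_on_labels_of_zero_set: "inj_on (labels_of_zero_set N) (Pow {1..N})"
  by (rule inj_on_inverseI[where g = "\<lambda>g. {i \<in> {1..N}. g i = 0}"])
    (auto simp: labels_of_zero_set_def)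

lemma label_vectors_eq_image:
  "label_vectors n1 n2 = labels_of_zero_set (n1 + n2) ` {Z. Z \<subseteq> {1..n1+n2} \<and> card Z = n1}"
proof (intro equalityI subsetI)
  fix g assume g: "g \<in> label_vectors n1 n2"
  let ?Z = "{i \<in> {1..n1+n2}. g i = 0}"
  have "g = labels_of_zero_set (n1 + n2) ?Z"
    using g by (force simp: label_vectors_def labels_of_zero_set_def)
  moreover have "card ?Z = n1" using g by (simp add: label_vectors_def)
  ultimately show "g \<in> labels_of_zero_set (n1 + n2) ` {Z. Z \<subseteq> {1..n1+n2} \<and> card Z = n1}"
    by blast
next
  fix g assume "g \<in> labels_of_zero_set (n1 + n2) ` {Z. Z \<subseteq> {1..n1+n2} \<and> card Z = n1}"
  then obtain Z where Z: "Z \<subseteq> {1..n1+n2}" "card Z = n1" and g: "g = labels_of_zero_set (n1 + n2) Z"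
    by blast
  have "{i \<in> {1..n1+n2}. g i = 0} = Z" using Z by (auto simp: g labels_of_zero_set_def)
  then show "g \<in> label_vectors n1 n2"
    using Z by (auto simp: g label_vectors_def labels_of_zero_set_def)
qed

lemma finite_label_vectors: "finite (label_vectors n1 n2)"
  by (simp add: label_vectors_eq_image)

lemma card_label_vectors: "card (label_vectors n1 n2) = (n1 + n2) choose n1"
proof -
  have "inj_on (labels_of_zero_set (n1 + n2)) {Z. Z \<subseteq> {1..n1+n2} \<and> card Z = n1}"
    by (rule inj_on_subset[OF inj_on_labels_of_zero_set]) blast
  then show ?thesis by (simp add: label_vectors_eq_image card_image n_subsets)
qed

lemma label_vectors_nonempty: "label_vectors n1 n2 \<noteq> {}"
  using card_label_vectors[of n1 n2] by (metis card.empty zero_less_binomial_iff le_add1 less_irrefl)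

lemma finite_set_pmf_label_pmf: "finite (set_pmf (label_pmf n1 n2))"
  by (simp add: label_pmf_def label_vectors_nonempty finite_label_vectors)

lemma card_subsets_containing_avoiding:
  assumes "finite U" and A: "A \<subseteq> U" and B: "B \<subseteq> U" and "A \<inter> B = {}" and "card A \<le> k"
  shows "card {Z. Z \<subseteq> U \<and> card Z = k \<and> A \<subseteq> Z \<and> Z \<inter> B = {}}
    = (card U - card A - card B) choose (k - card A)"
proof -
  let ?Ys = "{Y. Y \<subseteq> U - A - B \<and> card Y = k - card A}"
  have finA: "finite A" and finB: "finite B" using A B \<open>finite U\<close> finite_subset by blast+
  have "{Z. Z \<subseteq> U \<and> card Z = k \<and> A \<subseteq> Z \<and> Z \<inter> B = {}} = (\<lambda>Y. Y \<union> A) ` ?Ys"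
  proof (intro equalityI subsetI)
    fix Z assume Z: "Z \<in> {Z. Z \<subseteq> U \<and> card Z = k \<and> A \<subseteq> Z \<and> Z \<inter> B = {}}"
    then have "card (Z - A) = k - card A" by (simp add: card_Diff_subset finA)
    with Z show "Z \<in> (\<lambda>Y. Y \<union> A) ` ?Ys" by (intro image_eqI[of _ _ "Z - A"]) auto
  next
    fix Z assume "Z \<in> (\<lambda>Y. Y \<union> A) ` ?Ys"
    then obtain Y where Y: "Y \<in> ?Ys" and Z: "Z = Y \<union> A" by blast
    have "finite Y" "Y \<inter> A = {}" using Y \<open>finite U\<close> finite_subset by auto
    then have "card Z = k" using Y \<open>card A \<le> k\<close> by (simp add: Z card_Un_disjoint finA)
    then show "Z \<in> {Z. Z \<subseteq> U \<and> card Z = k \<and> A \<subseteq> Z \<and> Z \<inter> B = {}}"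
      using Y A \<open>A \<inter> B = {}\<close> by (auto simp: Z)
  qed
  moreover have "inj_on (\<lambda>Y. Y \<union> A) ?Ys" by (rule inj_onI) blast
  moreover have "card (U - A - B) = card U - card A - card B"
  proof -
    have "U - A - B = U - (A \<union> B)" by blast
    then show ?thesis
      using A B \<open>A \<inter> B = {}\<close> by (simp add: card_Diff_subset finA finB card_Un_disjoint)
  qed
  ultimately show ?thesis using \<open>finite U\<close> by (simp add: card_image n_subsets)
qed

lemma card_label_vectors_fixing:
  assumes A: "A \<subseteq> {1..n1+n2}" and B: "B \<subseteq> {1..n1+n2}" and "A \<inter> B = {}" and "card A \<le> n1"
  shows "card {g \<in> label_vectors n1 n2. (\<forall>i\<in>A. g i = 0) \<and> (\<forall>i\<in>B. g i = 1)}
    = (n1 + n2 - card A - card B) choose (n1 - card A)"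
proof -
  let ?Zs = "{Z. Z \<subseteq> {1..n1+n2} \<and> card Z = n1 \<and> A \<subseteq> Z \<and> Z \<inter> B = {}}"
  define fixed where "fixed g \<longleftrightarrow> (\<forall>i\<in>A. g i = 0) \<and> (\<forall>i\<in>B. g i = 1)" for g :: "nat \<Rightarrow> nat"
  have "fixed (labels_of_zero_set (n1 + n2) Z) \<longleftrightarrow> A \<subseteq> Z \<and> Z \<inter> B = {}" if "Z \<subseteq> {1..n1+n2}" for Z
    using A B that by (auto simp: fixed_def labels_of_zero_set_def)
  then have "{g \<in> label_vectors n1 n2. fixed g} = labels_of_zero_set (n1 + n2) ` ?Zs"
    unfolding label_vectors_eq_image by auto
  moreover have "inj_on (labels_of_zero_set (n1 + n2)) ?Zs"
    by (rule inj_on_subset[OF inj_on_labels_of_zero_set]) blast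
  ultimately have "card {g \<in> label_vectors n1 n2. fixed g} = card ?Zs"
    by (simp add: card_image)
  also have "\<dots> = (n1 + n2 - card A - card B) choose (n1 - card A)"
    using card_subsets_containing_avoiding[OF finite_atLeastAtMost A B] assms(3,4) by simp
  finally show ?thesis by (simp only: fixed_def)
qed

lemma prob_label_pmf_fixing:
  assumes A: "A \<subseteq> {1..n1+n2}" and B: "B \<subseteq> {1..n1+n2}" and AB: "A \<inter> B = {}"
  shows "measure_pmf.prob (label_pmf n1 n2) {g. (\<forall>i\<in>A. g i = 0) \<and> (\<forall>i\<in>B. g i = 1)}
    = falling_fact n1 (card A) * falling_fact n2 (card B) / falling_fact (n1 + n2) (card A + card B)"
proof -
  let ?a = "card A" and ?b = "card B"
  let ?F = "{g \<in> label_vectors n1 n2. (\<forall>i\<in>A. g i = 0) \<and> (\<forall>i\<in>B. g i = 1)}"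
  have "card (A \<union> B) \<le> n1 + n2" using card_mono[of "{1..n1+n2}" "A \<union> B"] A B by auto
  then have ab: "?a + ?b \<le> n1 + n2"
    using A B AB by (metis card_Un_disjoint finite_atLeastAtMost finite_subset)
  have prob: "measure_pmf.prob (label_pmf n1 n2) {g. (\<forall>i\<in>A. g i = 0) \<and> (\<forall>i\<in>B. g i = 1)}
      = card ?F / ((n1 + n2) choose n1)"
    by (simp add: label_pmf_def measure_pmf_of_set label_vectors_nonempty finite_label_vectors
        card_label_vectors Int_def)
  consider "n1 < ?a" | "?a \<le> n1" "n2 < ?b" | "?a \<le> n1" "?b \<le> n2" by linarith
  then show ?thesis
  proof cases
    case 1
    have "?F = {}"
    proof (intro equals0I)
      fix g assume g: "g \<in> ?F"
      then have "A \<subseteq> {i \<in> {1..n1+n2}. g i = 0}" using A by auto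
      then have "?a \<le> n1" using g card_mono[of "{i \<in> {1..n1+n2}. g i = 0}" A]
        by (auto simp: label_vectors_def)
      with 1 show False by simp
    qed
    then have "card ?F = 0" by (simp only: card.empty)
    with 1 show ?thesis unfolding prob by (simp add: falling_fact_of_nat_eq_0)
  next
    case 2
    then have "card ?F = 0"
      using card_label_vectors_fixing[OF A B AB] ab by (simp add: binomial_eq_0)
    with 2 show ?thesis unfolding prob by (simp add: falling_fact_of_nat_eq_0)
  next
    case 3
    define a' b' where "a' = n1 - ?a" and "b' = n2 - ?b"
    have fact_n1: "(fact n1 :: real) = fact a' * falling_fact n1 ?a"
      and fact_n2: "(fact n2 :: real) = fact b' * falling_fact n2 ?b"
      and fact_N: "(fact (n1 + n2) :: real) = fact (a' + b') * falling_fact (n1 + n2) (?a + ?b)"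
      using fact_eq_fact_diff_mult_falling_fact[of ?a n1] fact_eq_fact_diff_mult_falling_fact[of ?b n2]
        fact_eq_fact_diff_mult_falling_fact[of "?a + ?b" "n1 + n2"] 3
      by (simp_all add: a'_def b'_def)
    have "card ?F = (a' + b') choose a'"
      using card_label_vectors_fixing[OF A B AB] 3 by (simp add: a'_def b'_def)
    then have "card ?F / ((n1 + n2) choose n1)
        = (fact (a' + b') / (fact a' * fact b')) / (fact (n1 + n2) / (fact n1 * fact n2))"
      by (simp add: binomial_fact)
    also have "\<dots> = falling_fact n1 ?a * falling_fact n2 ?b / falling_fact (n1 + n2) (?a + ?b)"
      using falling_fact_of_nat_nonzero[OF ab] falling_fact_of_nat_nonzero[of ?a n1]
        falling_fact_of_nat_nonzero[of ?b n2] 3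
      by (simp add: fact_n1 fact_n2 fact_N field_simps)
    finally show ?thesis by (simp only: prob)
  qed
qed

lemma expectation_indicator_pmf:
  "measure_pmf.expectation p (\<lambda>x. if P x then 1 else 0) = measure_pmf.prob p {x. P x}"
proof -
  have "(\<lambda>x. if P x then 1 else 0) = (indicator {x. P x} :: 'a \<Rightarrow> real)"
    by (auto simp: indicator_def)
  then show ?thesis by simp
qed

lemma covariance_eq_pmf:
  assumes "finite (set_pmf p)"
  shows "covariance p X Y = measure_pmf.expectation p (\<lambda>x. X x * Y x)
    - measure_pmf.expectation p X * measure_pmf.expectation p Y"
  using assms by (simp add: covariance_def algebra_simps integrable_measure_pmf_finite)

lemma variance_eq_covariance: "measure_pmf.variance p X = covariance p X X"
  by (simp add: covariance_def power2_eq_square)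

lemma expectation_Rw:
  assumes "finite (set_pmf p)"
  shows "measure_pmf.expectation p (Rw E w a) = (\<Sum>e\<in>E. w e * measure_pmf.prob p {g. \<forall>i\<in>e. g i = a})"
  using assms unfolding Rw_def
  by (simp add: integrable_measure_pmf_finite expectation_indicator_pmf)

lemma expectation_Rw_mult:
  assumes "finite (set_pmf p)"
  shows "measure_pmf.expectation p (\<lambda>g. Rw E w a g * Rw E w b g)
    = (\<Sum>e\<in>E. \<Sum>f\<in>E. w e * w f * measure_pmf.prob p {g. (\<forall>i\<in>e. g i = a) \<and> (\<forall>i\<in>f. g i = b)})"
proof -
  have "Rw E w a g * Rw E w b g
      = (\<Sum>e\<in>E. \<Sum>f\<in>E. w e * w f * (if (\<forall>i\<in>e. g i = a) \<and> (\<forall>i\<in>f. g i = b) then 1 else 0))" for g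
    unfolding Rw_def sum_product by (intro sum.cong refl) auto
  then show ?thesis
    using assms by (simp add: integrable_measure_pmf_finite expectation_indicator_pmf)
qed

lemma simple_graph_on_edge: "simple_graph_on N E \<Longrightarrow> e \<in> E \<Longrightarrow> e \<subseteq> {1..N} \<and> card e = 2"
  by (fastforce simp: simple_graph_on_def)

lemma sum_pairs_card_Int:
  fixes w :: "'a set \<Rightarrow> real"
  assumes "finite U" and "finite E" and "\<And>e. e \<in> E \<Longrightarrow> e \<subseteq> U"
  shows "(\<Sum>e\<in>E. \<Sum>f\<in>E. w e * w f * real (card (e \<inter> f))) = (\<Sum>i\<in>U. (\<Sum>e\<in>{e\<in>E. i \<in> e}. w e)\<^sup>2)"
proof -
  have "real (card (e \<inter> f)) = (\<Sum>i\<in>U. (if i \<in> e then 1 else 0) * (if i \<in> f then 1 else 0))"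
    if "e \<in> E" for e f
  proof -
    have "e \<inter> f = U \<inter> (e \<inter> f)" using assms(3) that by auto
    then have "real (card (e \<inter> f)) = (\<Sum>i\<in>U \<inter> (e \<inter> f). 1)" by simp
    also have "\<dots> = (\<Sum>i\<in>U. if i \<in> e \<inter> f then 1 else 0)"
      by (rule sum.inter_restrict[OF assms(1)])
    also have "\<dots> = (\<Sum>i\<in>U. (if i \<in> e then 1 else 0) * (if i \<in> f then 1 else 0))"
      by (intro sum.cong) auto
    finally show ?thesis .
  qed
  then have "(\<Sum>e\<in>E. \<Sum>f\<in>E. w e * w f * real (card (e \<inter> f)))
      = (\<Sum>i\<in>U. \<Sum>e\<in>E. \<Sum>f\<in>E. (w e * (if i \<in> e then 1 else 0)) * (w f * (if i \<in> f then 1 else 0)))"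
    by (simp add: sum_distrib_left sum.swap[of _ U] mult_ac)
  also have "\<dots> = (\<Sum>i\<in>U. \<Sum>e\<in>E. \<Sum>f\<in>E. (if i \<in> e then w e else 0) * (if i \<in> f then w f else 0))"
    by (intro sum.cong refl) auto
  also have "\<dots> = (\<Sum>i\<in>U. (\<Sum>e\<in>{e\<in>E. i \<in> e}. w e)\<^sup>2)"
    using assms(2) by (simp add: power2_eq_square sum_product sum.inter_filter)
  finally show ?thesis .
qed

lemma card_Int_doubletons:
  assumes "card e = 2" and "card f = 2"
  shows "card (e \<union> f) = 4 - card (e \<inter> f)" and "card (e \<inter> f) \<le> 2"
    and "card (e \<inter> f) = 2 \<longleftrightarrow> e = f"
proof -
  have fin: "finite e" "finite f" using assms by (auto intro: card_ge_0_finite)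
  then show "card (e \<union> f) = 4 - card (e \<inter> f)"
    using card_Un_Int[of e f] assms by simp
  show "card (e \<inter> f) \<le> 2" using card_mono[OF fin(1), of "e \<inter> f"] assms by simp
  show "card (e \<inter> f) = 2 \<longleftrightarrow> e = f"
    using assms fin by (metis Int_absorb Int_lower1 Int_lower2 card_subset_eq)
qed

lemma sum_edge_pairs_card_Int:
  fixes w :: "'a set \<Rightarrow> real" and \<phi> :: "nat \<Rightarrow> real"
  assumes "finite U" and edges: "\<And>e. e \<in> E \<Longrightarrow> e \<subseteq> U \<and> card e = 2"
  shows "(\<Sum>e\<in>E. \<Sum>f\<in>E. w e * w f * \<phi> (card (e \<inter> f)))
    = \<phi> 0 * (\<Sum>e\<in>E. w e)\<^sup>2 + (\<phi> 1 - \<phi> 0) * (\<Sum>i\<in>U. (\<Sum>e\<in>{e\<in>E. i \<in> e}. w e)\<^sup>2)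
      + (\<phi> 2 - 2 * \<phi> 1 + \<phi> 0) * (\<Sum>e\<in>E. (w e)\<^sup>2)"
proof -
  have "finite E" using edges by (intro finite_subset[of E "Pow U"]) (auto simp: assms(1))
  have interpolation: "\<phi> (card (e \<inter> f)) = \<phi> 0 + (\<phi> 1 - \<phi> 0) * real (card (e \<inter> f))
      + (\<phi> 2 - 2 * \<phi> 1 + \<phi> 0) * (if e = f then 1 else 0)" if "e \<in> E" "f \<in> E" for e f
  proof -
    have "card (e \<inter> f) \<in> {0, 1, 2}" and "card (e \<inter> f) = 2 \<longleftrightarrow> e = f"
      using card_Int_doubletons[of e f] edges[OF that(1)] edges[OF that(2)] by auto
    then show ?thesis by auto
  qed
  have "(\<Sum>e\<in>E. \<Sum>f\<in>E. w e * w f * \<phi> (card (e \<inter> f)))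
      = (\<Sum>e\<in>E. \<Sum>f\<in>E. \<phi> 0 * (w e * w f) + (\<phi> 1 - \<phi> 0) * (w e * w f * real (card (e \<inter> f)))
          + (\<phi> 2 - 2 * \<phi> 1 + \<phi> 0) * (if e = f then w e * w f else 0))"
    by (intro sum.cong refl) (auto simp: interpolation algebra_simps)
  also have "\<dots> = \<phi> 0 * (\<Sum>e\<in>E. \<Sum>f\<in>E. w e * w f)
        + (\<phi> 1 - \<phi> 0) * (\<Sum>e\<in>E. \<Sum>f\<in>E. w e * w f * real (card (e \<inter> f)))
        + (\<phi> 2 - 2 * \<phi> 1 + \<phi> 0) * (\<Sum>e\<in>E. \<Sum>f\<in>E. if e = f then w e * w f else 0)"
    by (simp add: sum.distrib sum_distrib_left)
  also have "\<dots> = \<phi> 0 * (\<Sum>e\<in>E. w e)\<^sup>2 + (\<phi> 1 - \<phi> 0) * (\<Sum>i\<in>U. (\<Sum>e\<in>{e\<in>E. i \<in> e}. w e)\<^sup>2)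
      + (\<phi> 2 - 2 * \<phi> 1 + \<phi> 0) * (\<Sum>e\<in>E. (w e)\<^sup>2)"
    using \<open>finite E\<close> edges
    by (simp add: sum_pairs_card_Int[OF assms(1)] power2_eq_square sum_product)
  finally show ?thesis .
qed

lemma covariance_Rw:
  assumes "finite (set_pmf p)" and "finite U" and edges: "\<And>e. e \<in> E \<Longrightarrow> e \<subseteq> U \<and> card e = 2"
    and "\<And>e. e \<in> E \<Longrightarrow> measure_pmf.prob p {g. \<forall>i\<in>e. g i = a} = \<mu>\<^sub>a"
    and "\<And>e. e \<in> E \<Longrightarrow> measure_pmf.prob p {g. \<forall>i\<in>e. g i = b} = \<mu>\<^sub>b"
    and "\<And>e f. e \<in> E \<Longrightarrow> f \<in> E \<Longrightarrow>
      measure_pmf.prob p {g. (\<forall>i\<in>e. g i = a) \<and> (\<forall>i\<in>f. g i = b)} = \<phi> (card (e \<inter> f))"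
  shows "covariance p (Rw E w a) (Rw E w b)
    = (\<phi> 0 - \<mu>\<^sub>a * \<mu>\<^sub>b) * (\<Sum>e\<in>E. w e)\<^sup>2 + (\<phi> 1 - \<phi> 0) * (\<Sum>i\<in>U. (\<Sum>e\<in>{e\<in>E. i \<in> e}. w e)\<^sup>2)
      + (\<phi> 2 - 2 * \<phi> 1 + \<phi> 0) * (\<Sum>e\<in>E. (w e)\<^sup>2)"
proof -
  have "measure_pmf.expectation p (\<lambda>g. Rw E w a g * Rw E w b g)
      = (\<Sum>e\<in>E. \<Sum>f\<in>E. w e * w f * \<phi> (card (e \<inter> f)))"
    using assms(6) by (simp add: expectation_Rw_mult[OF assms(1)])
  also have "\<dots> = \<phi> 0 * (\<Sum>e\<in>E. w e)\<^sup>2 + (\<phi> 1 - \<phi> 0) * (\<Sum>i\<in>U. (\<Sum>e\<in>{e\<in>E. i \<in> e}. w e)\<^sup>2)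
      + (\<phi> 2 - 2 * \<phi> 1 + \<phi> 0) * (\<Sum>e\<in>E. (w e)\<^sup>2)"
    by (rule sum_edge_pairs_card_Int[OF assms(2) edges])
  finally have "measure_pmf.expectation p (\<lambda>g. Rw E w a g * Rw E w b g) = \<dots>" .
  moreover have "measure_pmf.expectation p (Rw E w a) = \<mu>\<^sub>a * (\<Sum>e\<in>E. w e)"
    and "measure_pmf.expectation p (Rw E w b) = \<mu>\<^sub>b * (\<Sum>e\<in>E. w e)"
    using assms(4,5) by (simp_all add: expectation_Rw[OF assms(1)] sum_distrib_left mult.commute)
  ultimately show ?thesis
    unfolding covariance_eq_pmf[OF assms(1)] by algebra
qed

definition label_pattern_probs :: "(nat \<Rightarrow> nat) pmf \<Rightarrow> nat \<Rightarrow> (nat \<Rightarrow> nat \<Rightarrow> real) \<Rightarrow> bool" where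
  "label_pattern_probs p N \<psi> \<longleftrightarrow> (\<forall>A B. A \<subseteq> {1..N} \<longrightarrow> B \<subseteq> {1..N} \<longrightarrow> A \<inter> B = {} \<longrightarrow>
     measure_pmf.prob p {g. (\<forall>i\<in>A. g i = 0) \<and> (\<forall>i\<in>B. g i = 1)} = \<psi> (card A) (card B))"

lemma label_pattern_probs_label_pmf:
  "label_pattern_probs (label_pmf n1 n2) (n1 + n2)
     (\<lambda>a b. falling_fact n1 a * falling_fact n2 b / falling_fact (n1 + n2) (a + b))"
  unfolding label_pattern_probs_def using prob_label_pmf_fixing by blast

lemma label_pattern_probs_edge:
  assumes "label_pattern_probs p N \<psi>" and "simple_graph_on N E" and "e \<in> E"
  shows "measure_pmf.prob p {g. \<forall>i\<in>e. g i = 0} = \<psi> 2 0"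
    and "measure_pmf.prob p {g. \<forall>i\<in>e. g i = 1} = \<psi> 0 2"
  using assms(1)[unfolded label_pattern_probs_def, rule_format, of e "{}"]
    assms(1)[unfolded label_pattern_probs_def, rule_format, of "{}" e] simple_graph_on_edge[OF assms(2,3)]
  by simp_all

lemma label_pattern_probs_edge_pair:
  assumes "label_pattern_probs p N \<psi>" and "simple_graph_on N E" and "e \<in> E" "f \<in> E"
  shows "measure_pmf.prob p {g. (\<forall>i\<in>e. g i = 0) \<and> (\<forall>i\<in>f. g i = 0)} = \<psi> (4 - card (e \<inter> f)) 0"
    and "measure_pmf.prob p {g. (\<forall>i\<in>e. g i = 1) \<and> (\<forall>i\<in>f. g i = 1)} = \<psi> 0 (4 - card (e \<inter> f))"
    and "measure_pmf.prob p {g. (\<forall>i\<in>e. g i = 0) \<and> (\<forall>i\<in>f. g i = 1)}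
      = (if card (e \<inter> f) = 0 then \<psi> 2 2 else 0)"
proof -
  note pattern = assms(1)[unfolded label_pattern_probs_def, rule_format]
  have e: "e \<subseteq> {1..N}" "card e = 2" and f: "f \<subseteq> {1..N}" "card f = 2"
    using simple_graph_on_edge[OF assms(2)] assms(3,4) by blast+
  show "measure_pmf.prob p {g. (\<forall>i\<in>e. g i = 0) \<and> (\<forall>i\<in>f. g i = 0)} = \<psi> (4 - card (e \<inter> f)) 0"
    and "measure_pmf.prob p {g. (\<forall>i\<in>e. g i = 1) \<and> (\<forall>i\<in>f. g i = 1)} = \<psi> 0 (4 - card (e \<inter> f))"
    using pattern[of "e \<union> f" "{}"] pattern[of "{}" "e \<union> f"] card_Int_doubletons(1)[of e f] e f
    by (simp_all add: ball_Un)
  show "measure_pmf.prob p {g. (\<forall>i\<in>e. g i = 0) \<and> (\<forall>i\<in>f. g i = 1)}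
      = (if card (e \<inter> f) = 0 then \<psi> 2 2 else 0)"
  proof (cases "e \<inter> f = {}")
    case True
    then show ?thesis using pattern[of e f] e f by simp
  next
    case False
    then obtain j where j: "j \<in> e" "j \<in> f" by blast
    have empty: "{g :: nat \<Rightarrow> nat. (\<forall>i\<in>e. g i = 0) \<and> (\<forall>i\<in>f. g i = 1)} = {}"
    proof (intro equals0I)
      fix g :: "nat \<Rightarrow> nat" assume "g \<in> {g. (\<forall>i\<in>e. g i = 0) \<and> (\<forall>i\<in>f. g i = 1)}"
      then have "g j = 0" "g j = 1" using j by auto
      then show False by simp
    qed
    have "card (e \<inter> f) \<noteq> 0" using False e(2)
      by (metis card_0_eq finite_Int card.infinite zero_neq_numeral)
    then show ?thesis unfolding empty by simp
  qed
qed

lemma Rw_moments: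
  fixes \<psi> :: "nat \<Rightarrow> nat \<Rightarrow> real"
  assumes fin: "finite (set_pmf p)" and "simple_graph_on N E"
    and pattern: "label_pattern_probs p N \<psi>"
  shows "measure_pmf.expectation p (Rw E w 0) = (\<Sum>e\<in>E. w e * \<psi> 2 0)"
    and "measure_pmf.expectation p (Rw E w 1) = (\<Sum>e\<in>E. w e * \<psi> 0 2)"
    and "measure_pmf.variance p (Rw E w 0) = (\<psi> 4 0 - (\<psi> 2 0)\<^sup>2) * (\<Sum>e\<in>E. w e)\<^sup>2
      + (\<psi> 3 0 - \<psi> 4 0) * (\<Sum>i\<in>{1..N}. (\<Sum>e\<in>{e\<in>E. i \<in> e}. w e)\<^sup>2)
      + (\<psi> 2 0 - 2 * \<psi> 3 0 + \<psi> 4 0) * (\<Sum>e\<in>E. (w e)\<^sup>2)"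
    and "measure_pmf.variance p (Rw E w 1) = (\<psi> 0 4 - (\<psi> 0 2)\<^sup>2) * (\<Sum>e\<in>E. w e)\<^sup>2
      + (\<psi> 0 3 - \<psi> 0 4) * (\<Sum>i\<in>{1..N}. (\<Sum>e\<in>{e\<in>E. i \<in> e}. w e)\<^sup>2)
      + (\<psi> 0 2 - 2 * \<psi> 0 3 + \<psi> 0 4) * (\<Sum>e\<in>E. (w e)\<^sup>2)"
    and "covariance p (Rw E w 0) (Rw E w 1) = (\<psi> 2 2 - \<psi> 2 0 * \<psi> 0 2) * (\<Sum>e\<in>E. w e)\<^sup>2
      - \<psi> 2 2 * (\<Sum>i\<in>{1..N}. (\<Sum>e\<in>{e\<in>E. i \<in> e}. w e)\<^sup>2) + \<psi> 2 2 * (\<Sum>e\<in>E. (w e)\<^sup>2)"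
proof -
  have edges: "\<And>e. e \<in> E \<Longrightarrow> e \<subseteq> {1..N} \<and> card e = 2"
    using assms(2) by (rule simple_graph_on_edge)
  note mono0 = label_pattern_probs_edge(1)[OF pattern assms(2)]
    and mono1 = label_pattern_probs_edge(2)[OF pattern assms(2)]
    and pair00 = label_pattern_probs_edge_pair(1)[OF pattern assms(2)]
    and pair11 = label_pattern_probs_edge_pair(2)[OF pattern assms(2)]
    and pair01 = label_pattern_probs_edge_pair(3)[OF pattern assms(2)]
  show "measure_pmf.expectation p (Rw E w 0) = (\<Sum>e\<in>E. w e * \<psi> 2 0)"
    and "measure_pmf.expectation p (Rw E w 1) = (\<Sum>e\<in>E. w e * \<psi> 0 2)"
    using mono0 mono1 by (simp_all add: expectation_Rw[OF fin])
  show "measure_pmf.variance p (Rw E w 0) = (\<psi> 4 0 - (\<psi> 2 0)\<^sup>2) * (\<Sum>e\<in>E. w e)\<^sup>2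
      + (\<psi> 3 0 - \<psi> 4 0) * (\<Sum>i\<in>{1..N}. (\<Sum>e\<in>{e\<in>E. i \<in> e}. w e)\<^sup>2)
      + (\<psi> 2 0 - 2 * \<psi> 3 0 + \<psi> 4 0) * (\<Sum>e\<in>E. (w e)\<^sup>2)"
    using covariance_Rw[where E = E and w = w, OF fin finite_atLeastAtMost edges mono0 mono0 pair00]
    unfolding variance_eq_covariance by (simp add: power2_eq_square)
  show "measure_pmf.variance p (Rw E w 1) = (\<psi> 0 4 - (\<psi> 0 2)\<^sup>2) * (\<Sum>e\<in>E. w e)\<^sup>2
      + (\<psi> 0 3 - \<psi> 0 4) * (\<Sum>i\<in>{1..N}. (\<Sum>e\<in>{e\<in>E. i \<in> e}. w e)\<^sup>2)
      + (\<psi> 0 2 - 2 * \<psi> 0 3 + \<psi> 0 4) * (\<Sum>e\<in>E. (w e)\<^sup>2)"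
    using covariance_Rw[where E = E and w = w, OF fin finite_atLeastAtMost edges mono1 mono1 pair11]
    unfolding variance_eq_covariance by (simp add: power2_eq_square)
  show "covariance p (Rw E w 0) (Rw E w 1) = (\<psi> 2 2 - \<psi> 2 0 * \<psi> 0 2) * (\<Sum>e\<in>E. w e)\<^sup>2
      - \<psi> 2 2 * (\<Sum>i\<in>{1..N}. (\<Sum>e\<in>{e\<in>E. i \<in> e}. w e)\<^sup>2) + \<psi> 2 2 * (\<Sum>e\<in>E. (w e)\<^sup>2)"
    using covariance_Rw[where E = E and w = w, OF fin finite_atLeastAtMost edges mono0 mono1 pair01]
    by simp
qed

lemma variance_closed_form:
  fixes x y N K S1 S2 S3 :: real
  assumes "x \<ge> 2" "y \<ge> 2" "N = x + y" "K = x * y * (x - 1) * (y - 1) / (N * (N - 1) * (N - 2) * (N - 3))"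
  shows "(falling_fact x 4 / falling_fact N 4 - (falling_fact x 2 / falling_fact N 2)\<^sup>2) * S3
      + (falling_fact x 3 / falling_fact N 3 - falling_fact x 4 / falling_fact N 4) * (S1 + S2)
      + (falling_fact x 2 / falling_fact N 2 - 2 * (falling_fact x 3 / falling_fact N 3)
         + falling_fact x 4 / falling_fact N 4) * S1
    = K * (- S2 + 2 * (2 * N - 3) / (N * (N - 1)) * S3
      + (N - 3) / (y - 1) * (S1 + S2) - 4 * (N - 3) / (N * (y - 1)) * S3)"
proof -
  have nz: "x + y \<noteq> 0" "x + y - 1 \<noteq> 0" "x + y - 2 \<noteq> 0" "x + y - 3 \<noteq> 0" "y - 1 \<noteq> 0"
    using assms(1,2) by auto
  have "falling_fact x 4 / falling_fact N 4 - (falling_fact x 2 / falling_fact N 2)\<^sup>2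
      = K * (2 * (2 * N - 3) / (N * (N - 1)) - 4 * (N - 3) / (N * (y - 1)))"
    unfolding assms(3,4) falling_fact_numerals using nz
    by (simp add: divide_simps power2_eq_square) algebra
  moreover have "falling_fact x 3 / falling_fact N 3 - falling_fact x 4 / falling_fact N 4
      = K * ((N - 3) / (y - 1) - 1)"
    unfolding assms(3,4) falling_fact_numerals using nz
    by (simp add: divide_simps) algebra
  moreover have "falling_fact x 2 / falling_fact N 2 - 2 * (falling_fact x 3 / falling_fact N 3)
      + falling_fact x 4 / falling_fact N 4 = K"
    unfolding assms(3,4) falling_fact_numerals using nz
    by (simp add: divide_simps) algebra
  ultimately show ?thesis by algebra
qed

lemma covariance_closed_form:
  fixes x y N K S1 S2 S3 :: real
  assumes "x \<ge> 2" "y \<ge> 2" "N = x + y" "K = x * y * (x - 1) * (y - 1) / (N * (N - 1) * (N - 2) * (N - 3))"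
  shows "(falling_fact x 2 * falling_fact y 2 / falling_fact N 4
        - falling_fact x 2 / falling_fact N 2 * (falling_fact y 2 / falling_fact N 2)) * S3
      - falling_fact x 2 * falling_fact y 2 / falling_fact N 4 * (S1 + S2)
      + falling_fact x 2 * falling_fact y 2 / falling_fact N 4 * S1
    = K * (- S2 + 2 * (2 * N - 3) / (N * (N - 1)) * S3)"
proof -
  have nz: "x + y \<noteq> 0" "x + y - 1 \<noteq> 0" "x + y - 2 \<noteq> 0" "x + y - 3 \<noteq> 0"
    using assms(1,2) by auto
  have q: "falling_fact x 2 * falling_fact y 2 / falling_fact N 4 = K"
    unfolding assms(3,4) falling_fact_numerals by (simp add: mult_ac)
  have d: "K - falling_fact x 2 / falling_fact N 2 * (falling_fact y 2 / falling_fact N 2)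
      = K * (2 * (2 * N - 3) / (N * (N - 1)))"
    unfolding assms(3,4) falling_fact_numerals using nz
    by (simp add: divide_simps) algebra
  show ?thesis unfolding q d by algebra
qed

theorem lemma1:
  fixes n1 n2 :: nat and E :: "nat set set" and w :: "nat set \<Rightarrow> real"
  assumes "n1 \<ge> 2" "n2 \<ge> 2"
    and "simple_graph_on (n1 + n2) E"
  defines "N \<equiv> real (n1 + n2)"
    and "p \<equiv> label_pmf n1 n2"
    and "R1 \<equiv> Rw E w 0" and "R2 \<equiv> Rw E w 1"
    and "S1 \<equiv> (\<Sum>e\<in>E. (w e)\<^sup>2)"
    and "S2 \<equiv> (\<Sum>i\<in>{1..n1+n2}. (\<Sum>e\<in>{e\<in>E. i \<in> e}. w e)\<^sup>2) - (\<Sum>e\<in>E. (w e)\<^sup>2)"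
    and "S3 \<equiv> (\<Sum>e\<in>E. w e)\<^sup>2"
    and "K \<equiv> real n1 * real n2 * (real n1 - 1) * (real n2 - 1) / (real (n1 + n2) * (real (n1 + n2) - 1) * (real (n1 + n2) - 2) * (real (n1 + n2) - 3))"
  shows "measure_pmf.expectation p R1 = (\<Sum>e\<in>E. w e * (real n1 * (real n1 - 1) / (N * (N - 1)))) \<and>
         measure_pmf.expectation p R2 = (\<Sum>e\<in>E. w e * (real n2 * (real n2 - 1) / (N * (N - 1)))) \<and>
         measure_pmf.variance p R1 =
           K * (- S2 + 2 * (2 * N - 3) / (N * (N - 1)) * S3
                + (N - 3) / (real n2 - 1) * (S1 + S2) - 4 * (N - 3) / (N * (real n2 - 1)) * S3) \<and>
         measure_pmf.variance p R2 =
           K * (- S2 + 2 * (2 * N - 3) / (N * (N - 1)) * S3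
                + (N - 3) / (real n1 - 1) * (S1 + S2) - 4 * (N - 3) / (N * (real n1 - 1)) * S3) \<and>
         covariance p R1 R2 = K * (- S2 + 2 * (2 * N - 3) / (N * (N - 1)) * S3)"
proof -
  define \<psi> where "\<psi> = (\<lambda>a b. falling_fact n1 a * falling_fact n2 b / falling_fact N (a + b))"
  have S: "(\<Sum>i\<in>{1..n1+n2}. (\<Sum>e\<in>{e\<in>E. i \<in> e}. w e)\<^sup>2) = S1 + S2" "(\<Sum>e\<in>E. w e)\<^sup>2 = S3"
    "(\<Sum>e\<in>E. (w e)\<^sup>2) = S1"
    by (simp_all add: S1_def S2_def S3_def)
  have fin: "finite (set_pmf p)" by (simp add: p_def finite_set_pmf_label_pmf)
  have pattern: "label_pattern_probs p (n1 + n2) \<psi>"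
    unfolding p_def \<psi>_def N_def by (rule label_pattern_probs_label_pmf)
  note moments = Rw_moments[OF fin assms(3) pattern, of w, unfolded S]
  have \<psi>_values: "\<psi> k 0 = falling_fact n1 k / falling_fact N k" "\<psi> 0 k = falling_fact n2 k / falling_fact N k"
    "\<psi> 2 2 = falling_fact n1 2 * falling_fact n2 2 / falling_fact N 4" for k
    by (simp_all add: \<psi>_def falling_fact_numerals(1))
  have N_eq: "N = real n1 + real n2" "N = real n2 + real n1"
    by (simp_all add: N_def)
  have K_eq: "K = real n1 * real n2 * (real n1 - 1) * (real n2 - 1) / (N * (N - 1) * (N - 2) * (N - 3))"
    "K = real n2 * real n1 * (real n2 - 1) * (real n1 - 1) / (N * (N - 1) * (N - 2) * (N - 3))"
    by (simp_all add: N_def K_def mult_ac)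
  show ?thesis
  proof (intro conjI)
    show "measure_pmf.expectation p R1 = (\<Sum>e\<in>E. w e * (real n1 * (real n1 - 1) / (N * (N - 1))))"
      unfolding R1_def moments(1) \<psi>_values falling_fact_numerals ..
    show "measure_pmf.expectation p R2 = (\<Sum>e\<in>E. w e * (real n2 * (real n2 - 1) / (N * (N - 1))))"
      unfolding R2_def moments(2) \<psi>_values falling_fact_numerals ..
    show "measure_pmf.variance p R1 =
           K * (- S2 + 2 * (2 * N - 3) / (N * (N - 1)) * S3
                + (N - 3) / (real n2 - 1) * (S1 + S2) - 4 * (N - 3) / (N * (real n2 - 1)) * S3)"
      unfolding R1_def moments(3) \<psi>_values by (rule variance_closed_form) (use assms(1,2) N_eq K_eq in simp_all)
    show "measure_pmf.variance p R2 =
           K * (- S2 + 2 * (2 * N - 3) / (N * (N - 1)) * S3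
                + (N - 3) / (real n1 - 1) * (S1 + S2) - 4 * (N - 3) / (N * (real n1 - 1)) * S3)"
      unfolding R2_def moments(4) \<psi>_values by (rule variance_closed_form) (use assms(1,2) N_eq K_eq in simp_all)
    show "covariance p R1 R2 = K * (- S2 + 2 * (2 * N - 3) / (N * (N - 1)) * S3)"
      unfolding R1_def R2_def moments(5) \<psi>_values by (rule covariance_closed_form) (use assms(1,2) N_eq K_eq in simp_all)
  qed
qed

end
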